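(* In every run of the algorithm described in the context, for all $i,j\in\{1,\dots,n\}$, every change of the value of the local variable $w\_sync_i[j]$ increases it by exactly $1$.
   Context: Model. There are $n$ asynchronous processes $p_1,\dots,p_n$, of which up to $t<n/2$ may crash; a process runs its algorithm correctly until it crashes. Each ordered pair of processes is linked by a reliable (no loss, corruption, duplication or creation), asynchronous, not necessarily FIFO channel. $p_w$ is the single writer, invoking writes sequentially; $v_0$ is the initial value. Messages: $\textsc{write}(b,v)$ with $b\in\{0,1\}$, which stands for the two types $\textsc{write0}(v)$ and $\textsc{write1}(v)$; $\textsc{read}()$; $\textsc{proceed}()$. Variables of $p_i$. These are: $history_i$ with $history_i[0]=v_0$; $w\_sync_i[1..n]$, initially all $0$; $r\_sync_i[1..n]$, initially all $0$. $\mathsf{write}(v)$ by $p_w$: $wsn\gets w\_sync_w[w]+1$; $w\_sync_w[w]\gets wsn$; $history_w[wsn]\gets v$. Send $\textsc{write}(wsn\bmod 2,v)$ to each $p_j$ with $w\_sync_w[j]=wsn-1$. Wait until at least $n-t$ indices $j$ have $w\_sync_w[j]=wsn$. Return. $\mathsf{read}()$ by $p_i$: $r\_sync_i[i]\gets r\_sync_i[i]+1$ and call the new value $rsn$. Send $\textsc{read}()$ to all $p_j$ with $j\ne i$. Wait until at least $n-t$ indices $j$ have $r\_sync_i[j]=rsn$. Let $sn\gets w\_sync_i[i]$. Wait until at least $n-t$ indices $j$ have $w\_sync_i[j]\ge sn$. Return $history_i[sn]$. On receipt of $\textsc{write}(b,v)$ from $p_j$ at $p_i$: Wait until $b=(w\_sync_i[j]+1)\bmod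 2$. Let $wsn\gets w\_sync_i[j]+1$. If $wsn=w\_sync_i[i]+1$, then set $w\_sync_i[i]\gets wsn$ and $history_i[wsn]\gets v$, and send $\textsc{write}(wsn\bmod 2,v)$ to each $p_\ell$ with $w\_sync_i[\ell]=wsn-1$. Else, if $wsn<w\_sync_i[i]$, send $\textsc{write}((wsn+1)\bmod 2,history_i[wsn+1])$ to $p_j$. Finally set $w\_sync_i[j]\gets wsn$. On receipt of $\textsc{read}()$ from $p_j$ at $p_i$: Let $sn\gets w\_sync_i[i]$; wait until $w\_sync_i[j]\ge sn$; send $\textsc{proceed}()$ to $p_j$. On receipt of $\textsc{proceed}()$ from $p_j$ at $p_i$: $r\_sync_i[j]\gets r\_sync_i[j]+1$. Message handlers run concurrently; a waiting handler does not block the reception of other messages. *)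

theory Defs
  imports Main "HOL-Library.Multiset"
begin

text \<open>Operational model of the SWMR register algorithm. Each local handler body (after its wait condition is satisfied) and each
operation step is executed atomically; waits are modelled by enabling conditions.\<close>

datatype 'v msg = WRITE nat 'v | READ | PROCEED

text \<open>Pending (received, not yet completed) handlers: sender, and the data.
A READ handler captures sn = w_sync_i[i] at receipt time.\<close>
datatype 'v hdl = HWrite nat nat 'v | HRead nat nat

datatype opst = Idle | WWait nat | RWait1 nat | RWait2 nat

record 'v config =
  hist :: "nat \<Rightarrow> nat \<Rightarrow> 'v option"
  wsync :: "nat \<Rightarrow> nat \<Rightarrow> nat"
  rsync :: "nat \<Rightarrow> nat \<Rightarrow> nat"
  opst :: "nat \<Rightarrow> opst"
  chan :: "(nat \<times> nat \<times> 'v msg) multiset"  \<comment> \<open>(sender, receiver, message)\<close>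
  pend :: "(nat \<times> 'v hdl) multiset"         \<comment> \<open>(receiver, pending handler)\<close>
  crashed :: "nat set"
  returned :: "nat \<Rightarrow> 'v option list"

definition upd2 :: "(nat \<Rightarrow> nat \<Rightarrow> 'a) \<Rightarrow> nat \<Rightarrow> nat \<Rightarrow> 'a \<Rightarrow> nat \<Rightarrow> nat \<Rightarrow> 'a" where
  "upd2 f i j x = f(i := (f i)(j := x))"

definition send_to :: "nat \<Rightarrow> nat \<Rightarrow> (nat \<Rightarrow> bool) \<Rightarrow> 'v msg \<Rightarrow> (nat \<times> nat \<times> 'v msg) multiset" where
  "send_to n i P m = image_mset (\<lambda>l. (i, l, m)) (mset_set {l \<in> {1..n}. P l})"

definition init_config :: "'v \<Rightarrow> 'v config" where
  "init_config v0 = \<lparr> hist = (\<lambda>i. (\<lambda>_. None)(0 := Some v0)),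
     wsync = (\<lambda>_ _. 0), rsync = (\<lambda>_ _. 0), opst = (\<lambda>_. Idle),
     chan = {#}, pend = {#}, crashed = {}, returned = (\<lambda>_. []) \<rparr>"

text \<open>Body of the WRITE handler at p_i for a message from p_j carrying v,
executed once its wait condition holds.\<close>
definition write_body :: "nat \<Rightarrow> nat \<Rightarrow> nat \<Rightarrow> 'v \<Rightarrow> 'v config \<Rightarrow> 'v config" where
  "write_body n i j v s =
    (let wsn = wsync s i j + 1;
         s1 = (if wsn = wsync s i i + 1 then
                 (let ws1 = upd2 (wsync s) i i wsn in
                  s\<lparr> wsync := ws1, hist := upd2 (hist s) i wsn (Some v),
                     chan := chan s + send_to n i (\<lambda>l. ws1 i l = wsn - 1) (WRITE (wsn mod 2) v) \<rparr>)
               else if wsn < wsync s i i then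
                  s\<lparr> chan := chan s + {# (i, j, WRITE ((wsn + 1) mod 2) (the (hist s i (wsn + 1)))) #} \<rparr>
               else s)
     in s1\<lparr> wsync := upd2 (wsync s1) i j wsn \<rparr>)"

inductive step :: "nat \<Rightarrow> nat \<Rightarrow> nat \<Rightarrow> 'v config \<Rightarrow> 'v config \<Rightarrow> bool" for n t w where
  invoke_write:
  "\<lbrakk> i = w; i \<notin> crashed s; opst s i = Idle; wsn = wsync s i i + 1;
     ws1 = upd2 (wsync s) i i wsn \<rbrakk> \<Longrightarrow>
   step n t w s (s\<lparr> wsync := ws1, hist := upd2 (hist s) i wsn (Some v),
                    opst := (opst s)(i := WWait wsn),
                    chan := chan s + send_to n i (\<lambda>l. ws1 i l = wsn - 1) (WRITE (wsn mod 2) v) \<rparr>)"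
| finish_write:
  "\<lbrakk> i \<notin> crashed s; opst s i = WWait wsn; card {j \<in> {1..n}. wsync s i j = wsn} \<ge> n - t \<rbrakk> \<Longrightarrow>
   step n t w s (s\<lparr> opst := (opst s)(i := Idle) \<rparr>)"
| invoke_read:
  "\<lbrakk> i \<in> {1..n}; i \<notin> crashed s; opst s i = Idle; rsn = rsync s i i + 1 \<rbrakk> \<Longrightarrow>
   step n t w s (s\<lparr> rsync := upd2 (rsync s) i i rsn, opst := (opst s)(i := RWait1 rsn),
                    chan := chan s + send_to n i (\<lambda>j. j \<noteq> i) READ \<rparr>)"
| read_phase2:
  "\<lbrakk> i \<notin> crashed s; opst s i = RWait1 rsn; card {j \<in> {1..n}. rsync s i j = rsn} \<ge> n - t \<rbrakk> \<Longrightarrow>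
   step n t w s (s\<lparr> opst := (opst s)(i := RWait2 (wsync s i i)) \<rparr>)"
| read_return:
  "\<lbrakk> i \<notin> crashed s; opst s i = RWait2 sn; card {j \<in> {1..n}. wsync s i j \<ge> sn} \<ge> n - t \<rbrakk> \<Longrightarrow>
   step n t w s (s\<lparr> opst := (opst s)(i := Idle),
                    returned := (returned s)(i := returned s i @ [hist s i sn]) \<rparr>)"
| recv_write:
  "\<lbrakk> (j, i, WRITE b v) \<in># chan s; i \<notin> crashed s \<rbrakk> \<Longrightarrow>
   step n t w s (s\<lparr> chan := chan s - {# (j, i, WRITE b v) #},
                    pend := pend s + {# (i, HWrite j b v) #} \<rparr>)"
| recv_read:
  "\<lbrakk> (j, i, READ) \<in># chan s; i \<notin> crashed s \<rbrakk> \<Longrightarrow>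
   step n t w s (s\<lparr> chan := chan s - {# (j, i, READ) #},
                    pend := pend s + {# (i, HRead j (wsync s i i)) #} \<rparr>)"
| recv_proceed:
  "\<lbrakk> (j, i, PROCEED) \<in># chan s; i \<notin> crashed s \<rbrakk> \<Longrightarrow>
   step n t w s (s\<lparr> chan := chan s - {# (j, i, PROCEED) #},
                    rsync := upd2 (rsync s) i j (rsync s i j + 1) \<rparr>)"
| exec_write:
  "\<lbrakk> (i, HWrite j b v) \<in># pend s; i \<notin> crashed s; b = (wsync s i j + 1) mod 2 \<rbrakk> \<Longrightarrow>
   step n t w s (write_body n i j v (s\<lparr> pend := pend s - {# (i, HWrite j b v) #} \<rparr>))"
| exec_read:
  "\<lbrakk> (i, HRead j sn) \<in># pend s; i \<notin> crashed s; wsync s i j \<ge> sn \<rbrakk> \<Longrightarrow>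
   step n t w s (s\<lparr> pend := pend s - {# (i, HRead j sn) #},
                    chan := chan s + {# (i, j, PROCEED) #} \<rparr>)"
| crash:
  "\<lbrakk> i \<in> {1..n}; i \<notin> crashed s; card (crashed s) < t \<rbrakk> \<Longrightarrow>
   step n t w s (s\<lparr> crashed := insert i (crashed s) \<rparr>)"

text \<open>A run: a sequence of configurations starting in the initial one, each
successive pair related by a step (or a stuttering step, to cover finite runs).\<close>
definition is_run :: "nat \<Rightarrow> nat \<Rightarrow> nat \<Rightarrow> 'v \<Rightarrow> (nat \<Rightarrow> 'v config) \<Rightarrow> bool" where
  "is_run n t w v0 ex \<longleftrightarrow> ex 0 = init_config v0 \<and>
     (\<forall>k. step n t w (ex k) (ex (Suc k)) \<or> ex (Suc k) = ex k)"

end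

theory Submission
  imports Defs
begin

text \<open>Every assignment to a \<open>w_sync\<close> entry stores its old value plus one: the writer
sets \<open>w_sync_w[w] := w_sync_w[w] + 1\<close>, and the WRITE handler at \<open>p_i\<close> from \<open>p_j\<close>
sets \<open>w_sync_i[j] := w_sync_i[j] + 1\<close> and overwrites \<open>w_sync_i[i]\<close> with the same
value only under the guard \<open>wsn = w_sync_i[i] + 1\<close>. So the claim holds for each
single step, independently of the run and of the resilience bound.\<close>

lemma upd2_apply: "upd2 f i j x a b = (if a = i \<and> b = j then x else f a b)"
  by (simp add: upd2_def)

lemma write_body_wsync_eq_or_Suc:
  "wsync (write_body n i j v s) a b = wsync s a b \<or>
   wsync (write_body n i j v s) a b = wsync s a b + 1"
  unfolding write_body_def Let_def by (auto simp: upd2_apply)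

lemma step_wsync_eq_or_Suc:
  assumes "step n t w s s'"
  shows "wsync s' a b = wsync s a b \<or> wsync s' a b = wsync s a b + 1"
  using assms
proof (cases rule: step.cases)
  case (exec_write i j c v)
  then show ?thesis
    using write_body_wsync_eq_or_Suc[of n i j v "s\<lparr>pend := pend s - {#(i, HWrite j c v)#}\<rparr>" a b]
    by simp
qed (auto simp: upd2_apply)

theorem lemma1:
  fixes n t w :: nat and v0 :: 'v and ex :: "nat \<Rightarrow> 'v config"
  assumes "2 * t < n" and "w \<in> {1..n}"
    and "is_run n t w v0 ex"
    and "i \<in> {1..n}" and "j \<in> {1..n}"
    and "wsync (ex (Suc k)) i j \<noteq> wsync (ex k) i j"
  shows "wsync (ex (Suc k)) i j = wsync (ex k) i j + 1"
proof -
  from \<open>is_run n t w v0 ex\<close> have "step n t w (ex k) (ex (Suc k)) \<or> ex (Suc k) = ex k"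
    by (simp add: is_run_def)
  with \<open>wsync (ex (Suc k)) i j \<noteq> wsync (ex k) i j\<close> show ?thesis
    using step_wsync_eq_or_Suc by metis
qed

end
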